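(* The sequence $a_k := N_{k,1}$ satisfies $a_1=2$, $a_2=6$, $a_3=14$, and $a_k = 2a_{k-1}+a_{k-2}-2a_{k-3}$ for all $k\ge 4$.
   Context: A $2\times k$ Nurikabe rectangle is a water/land coloring of the $2\times k$ grid of unit squares (columns indexed $1,\dots,k$ from left to right, no identifications) such that the set of water squares is connected under edge-adjacency (empty set counts as connected) and there is no $2\times 2$ block of four water squares. $\mathcal N_{k,1}$ is the set of $2\times k$ Nurikabe rectangles with exactly one water square in column $k$, and $N_{k,1}=|\mathcal N_{k,1}|$. *)

theory Defs
  imports Main
begin

(* A cell of the 2 x k grid is a pair (r, c) with row r \<in> {0,1} and column c \<in> {1..k}.
   A water/land colouring is represented by its set W of water squares. *)

definition cells :: "nat \<Rightarrow> (nat \<times> nat) set" where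
  "cells k = {0,1} \<times> {1..k}"

definition adjacent :: "nat \<times> nat \<Rightarrow> nat \<times> nat \<Rightarrow> bool" where
  "adjacent p q \<longleftrightarrow>
     (fst p = fst q \<and> (snd p = snd q + 1 \<or> snd q = snd p + 1)) \<or>
     (snd p = snd q \<and> (fst p = fst q + 1 \<or> fst q = fst p + 1))"

(* connectedness of W under edge-adjacency (paths staying inside W); empty set is connected *)
definition water_connected :: "(nat \<times> nat) set \<Rightarrow> bool" where
  "water_connected W \<longleftrightarrow>
     (\<forall>p\<in>W. \<forall>q\<in>W. (\<lambda>x y. x \<in> W \<and> y \<in> W \<and> adjacent x y)\<^sup>*\<^sup>* p q)"

(* no 2 x 2 block of water: in a 2-row grid, columns c and c+1 both fully water *)
definition no_pool :: "(nat \<times> nat) set \<Rightarrow> bool" where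
  "no_pool W \<longleftrightarrow>
     \<not> (\<exists>c. (0, c) \<in> W \<and> (1, c) \<in> W \<and> (0, Suc c) \<in> W \<and> (1, Suc c) \<in> W)"

definition nurikabe_rect :: "nat \<Rightarrow> (nat \<times> nat) set \<Rightarrow> bool" where
  "nurikabe_rect k W \<longleftrightarrow> W \<subseteq> cells k \<and> water_connected W \<and> no_pool W"

definition NurSet1 :: "nat \<Rightarrow> (nat \<times> nat) set set" where
  "NurSet1 k = {W. nurikabe_rect k W \<and> card {r. (r, k) \<in> W} = 1}"

definition N1 :: "nat \<Rightarrow> nat" where
  "N1 k = card (NurSet1 k)"

end

theory Submission
  imports Defs
begin

text \<open>In a grid with two rows, a water set is connected iff it is bridged: whenever water lies
on both sides of the gap between columns c and c+1, some row is water in both of these columns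
(a path can only cross the gap along such a row, and conversely such rows let one walk from
column to column). Hence a rectangle of width k+1 whose last column has water set C is either
C alone or L plus C, where L has width k, its last column meets C, and the two columns are not
both full. For each of the three nonempty C exactly two last columns of L qualify, so the
number t_k of rectangles of width k with a prescribed nonempty last column satisfies t_0 = 0 and
t_(k+1) = 1 + 2 t_k. Thus t_k = 2^k - 1 and N_(k,1) = 2 t_k = 2^(k+1) - 2, which satisfies the
recurrence because 1, 2 and -1 are the roots of x^3 - 2x^2 - x + 2.\<close>

definition column :: "(nat \<times> nat) set \<Rightarrow> nat \<Rightarrow> nat set" where
  "column W c = {r. (r, c) \<in> W}"

definition bridged :: "(nat \<times> nat) set \<Rightarrow> bool" where
  "bridged W \<longleftrightarrow> (\<forall>r1 a r2 b c. (r1, a) \<in> W \<longrightarrow> (r2, b) \<in> W \<longrightarrow> a \<le> c \<longrightarrow> c < b \<longrightarrow>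
     (\<exists>r. (r, c) \<in> W \<and> (r, Suc c) \<in> W))"

abbreviation water_adj :: "(nat \<times> nat) set \<Rightarrow> nat \<times> nat \<Rightarrow> nat \<times> nat \<Rightarrow> bool" where
  "water_adj W \<equiv> \<lambda>x y. x \<in> W \<and> y \<in> W \<and> adjacent x y"

lemma water_connected_imp_bridged:
  assumes "water_connected W"
  shows "bridged W"
  unfolding bridged_def
proof (intro allI impI)
  fix r1 a r2 b c
  assume p: "(r1, a) \<in> W" and q: "(r2, b) \<in> W" and "a \<le> c" "c < b"
  show "\<exists>r. (r, c) \<in> W \<and> (r, Suc c) \<in> W"
  proof (rule ccontr)
    assume no_bridge: "\<nexists>r. (r, c) \<in> W \<and> (r, Suc c) \<in> W"
    have "snd y \<le> c" if "(water_adj W)\<^sup>*\<^sup>* (r1, a) y" for y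
      using that
    proof (induction rule: rtranclp_induct)
      case base
      show ?case using \<open>a \<le> c\<close> by simp
    next
      case (step y z)
      obtain ry cy rz cz where "y = (ry, cy)" "z = (rz, cz)" by (cases y, cases z)
      with step no_bridge show ?case
        unfolding adjacent_def by (cases "cy < c") auto
    qed
    moreover have "(water_adj W)\<^sup>*\<^sup>* (r1, a) (r2, b)"
      using assms p q unfolding water_connected_def by blast
    ultimately show False using \<open>c < b\<close> by fastforce
  qed
qed

lemma two_row_same_column_connected:
  assumes "W \<subseteq> {0, 1} \<times> UNIV" "(r1, c) \<in> W" "(r2, c) \<in> W"
  shows "(water_adj W)\<^sup>*\<^sup>* (r1, c) (r2, c)"
proof (cases "r1 = r2")
  case False
  with assms have "adjacent (r1, c) (r2, c)" unfolding adjacent_def by auto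
  with assms show ?thesis by (simp add: r_into_rtranclp)
qed simp

lemma bridged_two_row_imp_water_connected:
  assumes rows: "W \<subseteq> {0, 1} \<times> UNIV" and "bridged W"
  shows "water_connected W"
proof -
  have forward: "(water_adj W)\<^sup>*\<^sup>* (r1, a) (r2, a + n)"
    if "(r1, a) \<in> W" "(r2, a + n) \<in> W" for n r1 a r2
    using that
  proof (induction n arbitrary: r1 a)
    case 0
    then show ?case using two_row_same_column_connected[OF rows] by simp
  next
    case (Suc n)
    have "a \<le> a" "a < a + Suc n" by simp_all
    with Suc.prems obtain r where r: "(r, a) \<in> W" "(r, Suc a) \<in> W"
      using \<open>bridged W\<close> unfolding bridged_def by blast
    have "(water_adj W)\<^sup>*\<^sup>* (r1, a) (r, a)"
      using two_row_same_column_connected[OF rows Suc.prems(1) r(1)] .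
    moreover have "water_adj W (r, a) (r, Suc a)"
      using r unfolding adjacent_def by simp
    moreover have "(water_adj W)\<^sup>*\<^sup>* (r, Suc a) (r2, a + Suc n)"
      using Suc.IH[OF r(2)] Suc.prems(2) by simp
    ultimately show ?case by (rule rtranclp_trans[OF rtranclp.rtrancl_into_rtrancl])
  qed
  have sym: "symp (water_adj W)\<^sup>*\<^sup>*"
    by (rule symp_rtranclp, rule sympI) (auto simp: adjacent_def)
  show ?thesis
    unfolding water_connected_def
  proof (intro ballI)
    fix p q assume p: "p \<in> W" and q: "q \<in> W"
    show "(water_adj W)\<^sup>*\<^sup>* p q"
    proof (cases "snd p \<le> snd q")
      case True
      then show ?thesis using forward[of "fst p" "snd p" "fst q" "snd q - snd p"] p q by simp
    next
      case False
      then have "(water_adj W)\<^sup>*\<^sup>* q p"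
        using forward[of "fst q" "snd q" "fst p" "snd p - snd q"] p q by simp
      then show ?thesis using sympD[OF sym] by blast
    qed
  qed
qed

lemma water_connected_iff_bridged:
  "W \<subseteq> {0, 1} \<times> UNIV \<Longrightarrow> water_connected W \<longleftrightarrow> bridged W"
  using water_connected_imp_bridged bridged_two_row_imp_water_connected by blast

lemma bridged_extend:
  assumes L: "\<forall>x\<in>L. snd x \<le> k" and "C \<noteq> {}"
  shows "bridged (L \<union> C \<times> {Suc k}) \<longleftrightarrow> bridged L \<and> (L \<noteq> {} \<longrightarrow> column L k \<inter> C \<noteq> {})"
    (is "bridged ?W \<longleftrightarrow> _")
proof
  assume W: "bridged ?W"
  have "bridged L"
    unfolding bridged_def
  proof (intro allI impI)
    fix r1 a r2 b c assume "(r1, a) \<in> L" "(r2, b) \<in> L" "a \<le> c" "c < b"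
    moreover have "Suc c \<le> k" using L \<open>(r2, b) \<in> L\<close> \<open>c < b\<close> by fastforce
    ultimately obtain r where "(r, c) \<in> ?W" "(r, Suc c) \<in> ?W"
      using W unfolding bridged_def by blast
    with \<open>Suc c \<le> k\<close> show "\<exists>r. (r, c) \<in> L \<and> (r, Suc c) \<in> L" by auto
  qed
  moreover have "column L k \<inter> C \<noteq> {}" if "L \<noteq> {}"
  proof -
    obtain r1 a where "(r1, a) \<in> L" using \<open>L \<noteq> {}\<close> by auto
    moreover obtain r2 where "r2 \<in> C" using \<open>C \<noteq> {}\<close> by auto
    moreover have "a \<le> k" using L \<open>(r1, a) \<in> L\<close> by fastforce
    ultimately obtain r where "(r, k) \<in> ?W" "(r, Suc k) \<in> ?W"
      using W unfolding bridged_def by blast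
    moreover have "(r, Suc k) \<notin> L" using L by fastforce
    ultimately show ?thesis unfolding column_def by auto
  qed
  ultimately show "bridged L \<and> (L \<noteq> {} \<longrightarrow> column L k \<inter> C \<noteq> {})" by blast
next
  assume "bridged L \<and> (L \<noteq> {} \<longrightarrow> column L k \<inter> C \<noteq> {})"
  then have "bridged L" and link: "L \<noteq> {} \<Longrightarrow> \<exists>r. (r, k) \<in> L \<and> r \<in> C"
    unfolding column_def by auto
  show "bridged ?W"
    unfolding bridged_def
  proof (intro allI impI)
    fix r1 a r2 b c assume "(r1, a) \<in> ?W" and q: "(r2, b) \<in> ?W" and "a \<le> c" "c < b"
    then have "(r1, a) \<in> L" using L by auto
    show "\<exists>r. (r, c) \<in> ?W \<and> (r, Suc c) \<in> ?W"
    proof (cases "b \<le> k")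
      case True
      with q L have "(r2, b) \<in> L" by auto
      with \<open>(r1, a) \<in> L\<close> \<open>bridged L\<close> \<open>a \<le> c\<close> \<open>c < b\<close> show ?thesis
        unfolding bridged_def by blast
    next
      case False
      with q L have "b = Suc k" by auto
      obtain r where r: "(r, k) \<in> L" "r \<in> C" using link \<open>(r1, a) \<in> L\<close> by blast
      show ?thesis
      proof (cases "c < k")
        case True
        with r \<open>(r1, a) \<in> L\<close> \<open>bridged L\<close> \<open>a \<le> c\<close> show ?thesis
          unfolding bridged_def by blast
      next
        case False
        with \<open>c < b\<close> \<open>b = Suc k\<close> have "c = k" by simp
        with r show ?thesis by blast
      qed
    qed
  qed
qed

lemma no_pool_extend:
  assumes L: "\<forall>x\<in>L. snd x \<le> k"
  shows "no_pool (L \<union> C \<times> {Suc k}) \<longleftrightarrow> no_pool L \<and> \<not> ({0, 1} \<subseteq> column L k \<and> {0, 1} \<subseteq> C)"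
    (is "no_pool ?W \<longleftrightarrow> _")
proof -
  have pool: "(0, c) \<in> ?W \<and> (1, c) \<in> ?W \<and> (0, Suc c) \<in> ?W \<and> (1, Suc c) \<in> ?W \<longleftrightarrow>
      (0, c) \<in> L \<and> (1, c) \<in> L \<and> (0, Suc c) \<in> L \<and> (1, Suc c) \<in> L \<or>
      c = k \<and> {0, 1} \<subseteq> column L k \<and> {0, 1} \<subseteq> C" for c
    using L unfolding column_def by (cases "c < k"; cases "c = k") fastforce+
  show ?thesis
    unfolding no_pool_def pool by blast
qed

lemma cells_two_rows: "cells k \<subseteq> {0, 1} \<times> UNIV"
  unfolding cells_def by auto

lemma nurikabe_rect_extend:
  assumes L: "L \<subseteq> cells k" and C: "C \<subseteq> {0, 1}" "C \<noteq> {}"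
  shows "nurikabe_rect (Suc k) (L \<union> C \<times> {Suc k}) \<longleftrightarrow>
    nurikabe_rect k L \<and> (L \<noteq> {} \<longrightarrow> column L k \<inter> C \<noteq> {}) \<and>
    \<not> ({0, 1} \<subseteq> column L k \<and> {0, 1} \<subseteq> C)"
proof -
  have cols: "\<forall>x\<in>L. snd x \<le> k"
    using L unfolding cells_def by auto
  have W: "L \<union> C \<times> {Suc k} \<subseteq> cells (Suc k)"
    using L C unfolding cells_def by auto
  show ?thesis
    unfolding nurikabe_rect_def
    using water_connected_iff_bridged[OF subset_trans[OF W cells_two_rows]]
      water_connected_iff_bridged[OF subset_trans[OF L cells_two_rows]]
      bridged_extend[OF cols C(2)] no_pool_extend[OF cols] L W
    by blast
qed

lemma nurikabe_rect_empty [simp]: "nurikabe_rect k {}"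
  unfolding nurikabe_rect_def water_connected_def no_pool_def by simp

definition nurikabe_ending :: "nat \<Rightarrow> nat set \<Rightarrow> (nat \<times> nat) set set" where
  "nurikabe_ending k C = {W. nurikabe_rect k W \<and> column W k = C}"

definition nurikabe_extendable :: "nat \<Rightarrow> nat set \<Rightarrow> (nat \<times> nat) set set" where
  "nurikabe_extendable k C = {L. nurikabe_rect k L \<and> column L k \<inter> C \<noteq> {} \<and>
     \<not> ({0, 1} \<subseteq> column L k \<and> {0, 1} \<subseteq> C)}"

lemma nurikabe_ending_Suc:
  assumes C: "C \<subseteq> {0, 1}" "C \<noteq> {}"
  shows "nurikabe_ending (Suc k) C =
    (\<lambda>L. L \<union> C \<times> {Suc k}) ` insert {} (nurikabe_extendable k C)"
proof (intro equalityI subsetI)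
  fix W assume "W \<in> nurikabe_ending (Suc k) C"
  then have W: "nurikabe_rect (Suc k) W" "column W (Suc k) = C"
    unfolding nurikabe_ending_def by auto
  define L where "L = {x \<in> W. snd x \<le> k}"
  have "L \<subseteq> cells k"
    using W(1) unfolding L_def nurikabe_rect_def cells_def by auto
  have "W = L \<union> C \<times> {Suc k}"
    using W unfolding L_def nurikabe_rect_def cells_def column_def by (auto simp: le_Suc_eq)
  with W(1) have "L \<in> insert {} (nurikabe_extendable k C)"
    using nurikabe_rect_extend[OF \<open>L \<subseteq> cells k\<close> C] unfolding nurikabe_extendable_def by auto
  with \<open>W = L \<union> C \<times> {Suc k}\<close> show "W \<in> (\<lambda>L. L \<union> C \<times> {Suc k}) ` insert {} (nurikabe_extendable k C)"
    by blast
next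
  fix W assume "W \<in> (\<lambda>L. L \<union> C \<times> {Suc k}) ` insert {} (nurikabe_extendable k C)"
  then obtain L where L: "L \<in> insert {} (nurikabe_extendable k C)" and W: "W = L \<union> C \<times> {Suc k}"
    by blast
  then have "L \<subseteq> cells k"
    unfolding nurikabe_extendable_def nurikabe_rect_def by auto
  with L W have "nurikabe_rect (Suc k) W"
    using nurikabe_rect_extend[OF \<open>L \<subseteq> cells k\<close> C]
    unfolding nurikabe_extendable_def by (auto simp: column_def)
  moreover have "column W (Suc k) = C"
    using \<open>L \<subseteq> cells k\<close> W unfolding cells_def column_def by auto
  ultimately show "W \<in> nurikabe_ending (Suc k) C"
    unfolding nurikabe_ending_def by simp
qed

lemma finite_nurikabe_rect: "finite {W. nurikabe_rect k W}"
proof (rule finite_subset)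
  show "{W. nurikabe_rect k W} \<subseteq> Pow (cells k)"
    unfolding nurikabe_rect_def by blast
  show "finite (Pow (cells k))"
    unfolding cells_def by simp
qed

lemma finite_nurikabe_ending: "finite (nurikabe_ending k C)"
  using finite_nurikabe_rect by (rule rev_finite_subset) (auto simp: nurikabe_ending_def)

lemma finite_nurikabe_extendable: "finite (nurikabe_extendable k C)"
  using finite_nurikabe_rect by (rule rev_finite_subset) (auto simp: nurikabe_extendable_def)

lemma card_nurikabe_ending_Suc:
  assumes C: "C \<subseteq> {0, 1}" "C \<noteq> {}"
  shows "card (nurikabe_ending (Suc k) C) = Suc (card (nurikabe_extendable k C))"
proof -
  have "inj_on (\<lambda>L. L \<union> C \<times> {Suc k}) (insert {} (nurikabe_extendable k C))"
  proof (rule inj_onI)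
    fix L1 L2
    assume "L1 \<in> insert {} (nurikabe_extendable k C)" "L2 \<in> insert {} (nurikabe_extendable k C)"
    then have "L1 \<inter> C \<times> {Suc k} = {}" "L2 \<inter> C \<times> {Suc k} = {}"
      unfolding nurikabe_extendable_def nurikabe_rect_def cells_def by auto
    moreover assume "L1 \<union> C \<times> {Suc k} = L2 \<union> C \<times> {Suc k}"
    ultimately show "L1 = L2" by blast
  qed
  moreover have "{} \<notin> nurikabe_extendable k C"
    unfolding nurikabe_extendable_def column_def by simp
  ultimately show ?thesis
    unfolding nurikabe_ending_Suc[OF C]
    by (simp add: card_image finite_nurikabe_extendable)
qed

lemma nurikabe_column_cases:
  assumes "nurikabe_rect k W"
  shows "column W c = {} \<or> column W c = {0} \<or> column W c = {1} \<or> column W c = {0, 1}"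
proof -
  have "column W c \<subseteq> {0, 1}"
    using assms unfolding nurikabe_rect_def cells_def column_def by auto
  then show ?thesis by blast
qed

lemma nurikabe_extendable_eq:
  "nurikabe_extendable k {0} = nurikabe_ending k {0} \<union> nurikabe_ending k {0, 1}"
  "nurikabe_extendable k {1} = nurikabe_ending k {1} \<union> nurikabe_ending k {0, 1}"
  "nurikabe_extendable k {0, 1} = nurikabe_ending k {0} \<union> nurikabe_ending k {1}"
  unfolding nurikabe_extendable_def nurikabe_ending_def
  using nurikabe_column_cases by fastforce+

lemma nurikabe_ending_disjoint:
  "A \<noteq> B \<Longrightarrow> nurikabe_ending k A \<inter> nurikabe_ending k B = {}"
  unfolding nurikabe_ending_def by blast

lemma card_nurikabe_ending:
  "card (nurikabe_ending k {0}) + 1 = 2 ^ k \<and> card (nurikabe_ending k {1}) + 1 = 2 ^ k \<and>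
   card (nurikabe_ending k {0, 1}) + 1 = 2 ^ k"
proof (induction k)
  case 0
  have "nurikabe_ending 0 C = {}" if "C \<noteq> {}" for C
    using that unfolding nurikabe_ending_def nurikabe_rect_def cells_def column_def by auto
  then show ?case by simp
next
  case (Suc k)
  have card_Un: "card (nurikabe_ending k A \<union> nurikabe_ending k B) =
      card (nurikabe_ending k A) + card (nurikabe_ending k B)" if "A \<noteq> B" for A B
    using card_Un_disjoint[OF finite_nurikabe_ending finite_nurikabe_ending
        nurikabe_ending_disjoint[OF that]] .
  show ?case
    using Suc.IH card_nurikabe_ending_Suc[of "{0}" k] card_nurikabe_ending_Suc[of "{1}" k]
      card_nurikabe_ending_Suc[of "{0, 1}" k]
    unfolding nurikabe_extendable_eq by (simp add: card_Un)
qed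

lemma N1_eq: "N1 k + 2 = 2 ^ Suc k"
proof -
  have "NurSet1 k = {W. nurikabe_rect k W \<and> card (column W k) = 1}"
    unfolding NurSet1_def column_def ..
  also have "\<dots> = nurikabe_ending k {0} \<union> nurikabe_ending k {1}"
    unfolding nurikabe_ending_def by (fastforce dest: nurikabe_column_cases[where c = k])
  finally have "N1 k = card (nurikabe_ending k {0}) + card (nurikabe_ending k {1})"
    unfolding N1_def
    by (simp add: card_Un_disjoint finite_nurikabe_ending nurikabe_ending_disjoint)
  then show ?thesis
    using card_nurikabe_ending[of k] by simp
qed

theorem lemma3p2:
  shows "N1 1 = 2 \<and> N1 2 = 6 \<and> N1 3 = 14 \<and>
         (\<forall>k\<ge>4. int (N1 k) = 2 * int (N1 (k - 1)) + int (N1 (k - 2)) - 2 * int (N1 (k - 3)))"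
proof (intro conjI allI impI)
  show "N1 1 = 2" "N1 2 = 6" "N1 3 = 14"
    using N1_eq[of 1] N1_eq[of 2] N1_eq[of 3] by simp_all
  have N1_int: "int (N1 n) = 2 * 2 ^ n - 2" for n
    using arg_cong[OF N1_eq[of n], of int] by simp
  fix k :: nat assume "k \<ge> 4"
  then obtain m where "k = m + 3" by (intro that[of "k - 3"]) simp
  then show "int (N1 k) = 2 * int (N1 (k - 1)) + int (N1 (k - 2)) - 2 * int (N1 (k - 3))"
    unfolding N1_int by (simp add: power_add)
qed

end
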